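(* Let $f\in\mathcal{F}_k$. For any $u\in\mathbb{R}^k$, we have $L^f(\boxed{u},y)\le L^f(u,y)$ for all $y\in\mathcal{Y}$.
   Context: $[k]=\{1,\dots,k\}$, $\mathcal{Y}=\{-1,1\}^k$; $u\odot u'$ entrywise product, $|u|$ entrywise absolute value, $\mathbbm{1}$ all-ones, $(x)_+$ entrywise positive part; $\boxed{u}=\mathrm{sign}(u)\odot\min(|u|,\mathbbm{1})$ (clipping to $[-1,1]^k$). $\mathcal{F}_k$: set functions $f:2^{[k]}\to\mathbb{R}$ that are submodular, increasing ($f(S\cup T)\ge f(S)$ for disjoint $S,T$) and normalized. Lovász extension $F(x)=\max_\pi\sum_{i=1}^kx_{\pi_i}(f(\{\pi_1,..,\pi_i\})-f(\{\pi_1,..,\pi_{i-1}\}))$ for $x\in\mathbb{R}^k_+$; Lovász hinge $L^f(u,y)=F((\mathbbm{1}-u\odot y)_+)$. *)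

theory Defs
  imports "HOL-Analysis.Analysis" "HOL-Combinatorics.Permutations"
begin

text \<open>Ground set [k] = {1..k}; vectors in R^k are functions nat => real,
  only the coordinates in {1..k} matter.\<close>

definition submodular_on :: "nat \<Rightarrow> (nat set \<Rightarrow> real) \<Rightarrow> bool" where
  "submodular_on k f \<longleftrightarrow> (\<forall>S T. S \<subseteq> {1..k} \<longrightarrow> T \<subseteq> {1..k} \<longrightarrow>
      f (S \<union> T) + f (S \<inter> T) \<le> f S + f T)"

definition increasing_on :: "nat \<Rightarrow> (nat set \<Rightarrow> real) \<Rightarrow> bool" where
  "increasing_on k f \<longleftrightarrow> (\<forall>S T. S \<subseteq> {1..k} \<longrightarrow> T \<subseteq> {1..k} \<longrightarrow> S \<inter> T = {} \<longrightarrow>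
      f S \<le> f (S \<union> T))"

definition normalized :: "(nat set \<Rightarrow> real) \<Rightarrow> bool" where
  "normalized f \<longleftrightarrow> f {} = 0"

definition F_class :: "nat \<Rightarrow> (nat set \<Rightarrow> real) set" where
  "F_class k = {f. submodular_on k f \<and> increasing_on k f \<and> normalized f}"

definition lovasz_ext :: "nat \<Rightarrow> (nat set \<Rightarrow> real) \<Rightarrow> (nat \<Rightarrow> real) \<Rightarrow> real" where
  "lovasz_ext k f x = Max ((\<lambda>p. \<Sum>i=1..k. x (p i) * (f (p ` {1..i}) - f (p ` {1..i-1})))
        ` {p. p permutes {1..k}})"

definition pos_part :: "(nat \<Rightarrow> real) \<Rightarrow> (nat \<Rightarrow> real)" where
  "pos_part x = (\<lambda>i. max (x i) 0)"

definition lovasz_hinge :: "nat \<Rightarrow> (nat set \<Rightarrow> real) \<Rightarrow> (nat \<Rightarrow> real) \<Rightarrow> (nat \<Rightarrow> real) \<Rightarrow> real" where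
  "lovasz_hinge k f u y = lovasz_ext k f (pos_part (\<lambda>i. 1 - u i * y i))"

definition clip :: "(nat \<Rightarrow> real) \<Rightarrow> (nat \<Rightarrow> real)" where
  "clip u = (\<lambda>i. sgn (u i) * min \<bar>u i\<bar> 1)"

end

theory Submission
  imports Defs
begin

text \<open>For an increasing f every marginal gain in the Lovasz extension is nonnegative, so the
  extension is monotone in its argument. With y = \<plusminus>1, clipping leaves the margin u y unchanged
  when |u| \<le> 1 and otherwise replaces it by the sign of u y, which never increases max (1 - u y) 0.\<close>

definition lovasz_sum :: "nat \<Rightarrow> (nat set \<Rightarrow> real) \<Rightarrow> (nat \<Rightarrow> real) \<Rightarrow> (nat \<Rightarrow> nat) \<Rightarrow> real" where
  "lovasz_sum k f x p = (\<Sum>i=1..k. x (p i) * (f (p ` {1..i}) - f (p ` {1..i-1})))"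

lemma lovasz_ext_eq_Max_lovasz_sum:
  "lovasz_ext k f x = Max (lovasz_sum k f x ` {p. p permutes {1..k}})"
  unfolding lovasz_ext_def lovasz_sum_def ..

lemma finite_lovasz_sums: "finite (lovasz_sum k f x ` {p. p permutes {1..k}})"
  by (simp add: finite_permutations)

lemma lovasz_sum_le_lovasz_ext:
  "p permutes {1..k} \<Longrightarrow> lovasz_sum k f x p \<le> lovasz_ext k f x"
  unfolding lovasz_ext_eq_Max_lovasz_sum by (rule Max_ge[OF finite_lovasz_sums]) blast

lemma lovasz_ext_attained:
  obtains p where "p permutes {1..k}" "lovasz_ext k f x = lovasz_sum k f x p"
proof -
  have "lovasz_ext k f x \<in> lovasz_sum k f x ` {p. p permutes {1..k}}"
    unfolding lovasz_ext_eq_Max_lovasz_sum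
    using finite_lovasz_sums permutes_id by (intro Max_in) blast+
  then show ?thesis using that by blast
qed

lemma increasing_on_mono:
  assumes "increasing_on k f" "S \<subseteq> T" "T \<subseteq> {1..k}"
  shows "f S \<le> f T"
proof -
  have "f S \<le> f (S \<union> (T - S))"
    using assms unfolding increasing_on_def by (metis Diff_disjoint Diff_subset order_trans)
  then show ?thesis using \<open>S \<subseteq> T\<close> by (simp add: Un_absorb1)
qed

lemma lovasz_gain_nonneg:
  assumes "increasing_on k f" "p permutes {1..k}" "i \<le> k"
  shows "f (p ` {1..i-1}) \<le> f (p ` {1..i})"
proof (rule increasing_on_mono[OF assms(1)])
  show "p ` {1..i-1} \<subseteq> p ` {1..i}" by (intro image_mono) auto
  have "p ` {1..i} \<subseteq> p ` {1..k}" using \<open>i \<le> k\<close> by (intro image_mono) auto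
  then show "p ` {1..i} \<subseteq> {1..k}" using permutes_image[OF assms(2)] by simp
qed

lemma lovasz_sum_mono:
  assumes "increasing_on k f" "p permutes {1..k}" "\<And>i. i \<in> {1..k} \<Longrightarrow> x i \<le> x' i"
  shows "lovasz_sum k f x p \<le> lovasz_sum k f x' p"
  unfolding lovasz_sum_def
proof (rule sum_mono, rule mult_right_mono)
  fix i assume i: "i \<in> {1..k}"
  then show "x (p i) \<le> x' (p i)" using assms(3) permutes_in_image[OF assms(2)] by blast
  show "0 \<le> f (p ` {1..i}) - f (p ` {1..i-1})"
    using lovasz_gain_nonneg[OF assms(1,2)] i by simp
qed

lemma lovasz_ext_mono:
  assumes "increasing_on k f" "\<And>i. i \<in> {1..k} \<Longrightarrow> x i \<le> x' i"
  shows "lovasz_ext k f x \<le> lovasz_ext k f x'"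
proof -
  obtain p where p: "p permutes {1..k}" and attained: "lovasz_ext k f x = lovasz_sum k f x p"
    by (rule lovasz_ext_attained)
  note attained
  also have "\<dots> \<le> lovasz_sum k f x' p" using lovasz_sum_mono[OF assms(1) p assms(2)] .
  also have "\<dots> \<le> lovasz_ext k f x'" using p by (rule lovasz_sum_le_lovasz_ext)
  finally show ?thesis .
qed

lemma hinge_clip_le:
  fixes u y :: real
  assumes "\<bar>y\<bar> = 1"
  shows "max (1 - sgn u * min \<bar>u\<bar> 1 * y) 0 \<le> max (1 - u * y) 0"
proof (cases "\<bar>u\<bar> \<le> 1")
  case True
  then show ?thesis by (simp add: sgn_mult_abs min_absorb1)
next
  case False
  define s where "s = sgn u * y"
  have margin: "u * y = \<bar>u\<bar> * s"
    unfolding s_def by (metis abs_mult_sgn mult.assoc)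
  have "\<bar>s\<bar> = 1"
    using assms False unfolding s_def by (simp add: abs_mult abs_sgn_eq)
  then have "s = 1 \<or> s = -1" by arith
  have clipped_margin: "sgn u * min \<bar>u\<bar> 1 * y = s"
    using False unfolding s_def by simp
  have "max (1 - s) 0 \<le> max (1 - \<bar>u\<bar> * s) 0"
    using \<open>s = 1 \<or> s = -1\<close> False by auto
  then show ?thesis unfolding clipped_margin margin .
qed

theorem lemma2:
  fixes k :: nat and f :: "nat set \<Rightarrow> real" and u y :: "nat \<Rightarrow> real"
  assumes "f \<in> F_class k"
    and "\<forall>i\<in>{1..k}. y i \<in> {-1, 1}"
  shows "lovasz_hinge k f (clip u) y \<le> lovasz_hinge k f u y"
  unfolding lovasz_hinge_def
proof (rule lovasz_ext_mono)
  show "increasing_on k f" using assms(1) by (simp add: F_class_def)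
  fix i assume "i \<in> {1..k}"
  then have "\<bar>y i\<bar> = 1" using assms(2) by force
  then show "pos_part (\<lambda>i. 1 - clip u i * y i) i \<le> pos_part (\<lambda>i. 1 - u i * y i) i"
    unfolding pos_part_def clip_def by (rule hinge_clip_le)
qed

end
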